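(* Fix $\delta\in[0,1)$ and consider the logistic bandit interaction with actions chosen by THaTS. For all $t\ge1$, letting $A_t^{\mathrm{MU}}\in\arg\max_{a\in\mathcal A(S_t)}\max_{\theta\in\mathcal V_t}U(S_t,a,\theta,L_t)$ and $\omega_t^{\mathrm{MU}}\in\arg\min_{\theta\in\mathcal E_t(\delta,\bar\theta_t)}\dot\mu(\phi(S_t,A_t^{\mathrm{MU}})^\top\theta)$, it holds almost surely that $$\mathbb E\big[U(S_t,A_t^{\mathrm{MU}},\omega_t^{\mathrm{MU}},L_t)\,\big|\,\mathcal F_{t-1}\big]\le\sqrt{\frac{\pi d}{2}}\;\mathbb E\big[U(S_t,A_t,\bar\theta_t,L_t)\,\big|\,\mathcal F_{t-1}\big].$$
   Context: Logistic setting: $\mu(x)=1/(1+e^{-x})$; context space $\mathcal S$ with distribution $\nu$; finite nonempty action sets $\mathcal A(s)$; features $\phi(s,a)\in\mathbb R^d$ with $\|\phi(s,a)\|\le1$; unknown $\theta_*$ with $\|\theta_*\|\le S$; $\mathbb B_d(S)$ the closed ball of radius $S$. Rounds: $S_t\sim\nu$ independent of the past, $A_t\in\mathcal A(S_t)$, $X_t\in\{0,1\}$ Bernoulli with mean $\mu(\phi(S_t,A_t)^\top\theta_* )$. $\mathcal F_{t-1}=\sigma((S_i,A_i,X_i)_{i<t}$, previous internal randomness$)$. $U(s,a,\theta,L)=\dot\mu(\phi(s,a)^\top\theta)\|\phi(s,a)\|_{L^{-1}}$, $\|x\|_M=\sqrt{x^\top Mx}$. With $\phi_i=\phi(S_i,A_i)$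 and $\lambda>0$: $\mathcal L_t^\lambda(\theta)=\lambda\|\theta\|^2-\sum_{i<t}[X_i\log\mu(\phi_i^\top\theta)+(1-X_i)\log(1-\mu(\phi_i^\top\theta))]$; $\bar\theta_t=\arg\min_{\mathbb B_d(S)}\mathcal L_t^\lambda$; $\beta_t(\delta)>0$ a deterministic radius; $\mathcal E_t(\delta,\theta_\circ)=\{\theta\in\mathbb B_d(S):\mathcal L_t^\lambda(\theta)-\mathcal L_t^\lambda(\theta_\circ)\le2\beta_t(\delta)^2\}$; $\mathcal V_t=\bigcap_{i=1}^{t-1}\mathcal E_i(\delta,\bar\theta_i)$ (empty intersection $=\mathbb R^d$). $L_1=\lambda I$, $L_{i+1}=L_i+\dot\mu(\phi_i^\top\theta_i')\phi_i\phi_i^\top$ with $\theta_i'=\arg\min_{\theta\in\mathcal E_i(\delta,\bar\theta_i)}\dot\mu(\phi_i^\top\theta)$. THaTS rule at round $t$: given $\mathcal F_{t-1}$ and $S_t$, sample $\tilde\theta_t\sim\mathcal N(0,L_t^{-1})$ and choose $A_t\in\arg\max_{a\in\mathcal A(S_t)}\dot\mu(\phi(S_t,a)^\top\bar\theta_t)|\phi(S_t,a)^\top\tilde\theta_t|$. *)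

theory Defs
  imports "HOL-Probability.Probability"
begin

definition mu :: "real \<Rightarrow> real" where
  "mu x = 1 / (1 + exp (- x))"

definition mudot :: "real \<Rightarrow> real" where
  "mudot x = mu x * (1 - mu x)"

definition inv_norm :: "real^'d \<Rightarrow> real^'d^'d \<Rightarrow> real" where
  "inv_norm v L = sqrt (v \<bullet> (matrix_inv L *v v))"

definition Ubonus :: "('s \<Rightarrow> 'a \<Rightarrow> real^'d) \<Rightarrow> 's \<Rightarrow> 'a \<Rightarrow> real^'d \<Rightarrow> real^'d^'d \<Rightarrow> real" where
  "Ubonus phi s a \<theta> L = mudot (phi s a \<bullet> \<theta>) * inv_norm (phi s a) L"

definition loss :: "real \<Rightarrow> ('s \<Rightarrow> 'a \<Rightarrow> real^'d) \<Rightarrow> (nat \<Rightarrow> 's) \<Rightarrow> (nat \<Rightarrow> 'a) \<Rightarrow> (nat \<Rightarrow> real)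
    \<Rightarrow> nat \<Rightarrow> real^'d \<Rightarrow> real" where
  "loss lam phi s a x t \<theta> = lam * (norm \<theta>)\<^sup>2
     - (\<Sum>i\<in>{1..<t}. x i * ln (mu (phi (s i) (a i) \<bullet> \<theta>))
                     + (1 - x i) * ln (1 - mu (phi (s i) (a i) \<bullet> \<theta>)))"

definition theta_bar :: "real \<Rightarrow> real \<Rightarrow> ('s \<Rightarrow> 'a \<Rightarrow> real^'d) \<Rightarrow> (nat \<Rightarrow> 's) \<Rightarrow> (nat \<Rightarrow> 'a)
    \<Rightarrow> (nat \<Rightarrow> real) \<Rightarrow> nat \<Rightarrow> real^'d" where
  "theta_bar lam S phi s a x t =
     (SOME \<theta>. \<theta> \<in> cball 0 S \<and> (\<forall>\<theta>'\<in>cball 0 S. loss lam phi s a x t \<theta> \<le> loss lam phi s a x t \<theta>'))"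

text \<open>Confidence set E_t(delta, theta0); beta t stands for beta_t(delta).\<close>
definition Eset :: "real \<Rightarrow> real \<Rightarrow> (nat \<Rightarrow> real) \<Rightarrow> ('s \<Rightarrow> 'a \<Rightarrow> real^'d) \<Rightarrow> (nat \<Rightarrow> 's)
    \<Rightarrow> (nat \<Rightarrow> 'a) \<Rightarrow> (nat \<Rightarrow> real) \<Rightarrow> nat \<Rightarrow> real^'d \<Rightarrow> (real^'d) set" where
  "Eset lam S beta phi s a x t \<theta>0 =
     {\<theta> \<in> cball 0 S. loss lam phi s a x t \<theta> - loss lam phi s a x t \<theta>0 \<le> 2 * (beta t)\<^sup>2}"

definition Ebar :: "real \<Rightarrow> real \<Rightarrow> (nat \<Rightarrow> real) \<Rightarrow> ('s \<Rightarrow> 'a \<Rightarrow> real^'d) \<Rightarrow> (nat \<Rightarrow> 's)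
    \<Rightarrow> (nat \<Rightarrow> 'a) \<Rightarrow> (nat \<Rightarrow> real) \<Rightarrow> nat \<Rightarrow> (real^'d) set" where
  "Ebar lam S beta phi s a x t = Eset lam S beta phi s a x t (theta_bar lam S phi s a x t)"

text \<open>V_t = intersection of E_i(delta, theta_bar_i), i = 1..t-1 (empty intersection = UNIV).\<close>
definition Vset :: "real \<Rightarrow> real \<Rightarrow> (nat \<Rightarrow> real) \<Rightarrow> ('s \<Rightarrow> 'a \<Rightarrow> real^'d) \<Rightarrow> (nat \<Rightarrow> 's)
    \<Rightarrow> (nat \<Rightarrow> 'a) \<Rightarrow> (nat \<Rightarrow> real) \<Rightarrow> nat \<Rightarrow> (real^'d) set" where
  "Vset lam S beta phi s a x t = (\<Inter>i\<in>{1..<t}. Ebar lam S beta phi s a x i)"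

definition outer :: "real^'d \<Rightarrow> real^'d^'d" where
  "outer v = (\<chi> i j. v $ i * v $ j)"

text \<open>Lmat n is L_{n+1}: L_1 = lam I and
  L_{i+1} = L_i + mudot(phi_i . theta'_i) phi_i phi_i^T, where
  mudot(phi_i . theta'_i) = min over E_i(delta, theta_bar_i) of mudot(phi_i . theta).\<close>
primrec Lmat :: "real \<Rightarrow> real \<Rightarrow> (nat \<Rightarrow> real) \<Rightarrow> ('s \<Rightarrow> 'a \<Rightarrow> real^'d) \<Rightarrow> (nat \<Rightarrow> 's)
    \<Rightarrow> (nat \<Rightarrow> 'a) \<Rightarrow> (nat \<Rightarrow> real) \<Rightarrow> nat \<Rightarrow> real^'d^'d" where
  "Lmat lam S beta phi s a x 0 = lam *\<^sub>R mat 1"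
| "Lmat lam S beta phi s a x (Suc n) = Lmat lam S beta phi s a x n
     + (INF \<theta>\<in>Ebar lam S beta phi s a x (Suc n). mudot (phi (s (Suc n)) (a (Suc n)) \<bullet> \<theta>))
       *\<^sub>R outer (phi (s (Suc n)) (a (Suc n)))"

definition Lt :: "real \<Rightarrow> real \<Rightarrow> (nat \<Rightarrow> real) \<Rightarrow> ('s \<Rightarrow> 'a \<Rightarrow> real^'d) \<Rightarrow> (nat \<Rightarrow> 's)
    \<Rightarrow> (nat \<Rightarrow> 'a) \<Rightarrow> (nat \<Rightarrow> real) \<Rightarrow> nat \<Rightarrow> real^'d^'d" where
  "Lt lam S beta phi s a x t = Lmat lam S beta phi s a x (t - 1)"

text \<open>Centred Gaussian N(0, L^{-1}) on R^d, given by its density w.r.t. Lebesgue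
  measure in terms of the precision matrix L (positive definite).\<close>
definition gaussian_prec :: "real^'d^'d \<Rightarrow> (real^'d) measure" where
  "gaussian_prec L = density lborel
     (\<lambda>v. ennreal (sqrt (det L) / (2 * pi) powr (real CARD('d) / 2) * exp (- (v \<bullet> (L *v v)) / 2)))"

end

theory Submission
  imports Defs
begin

text \<open>Fix a context and let \<open>p\<close> be the feature of the most uncertain action. As \<open>theta_bar\<close> lies
  in the confidence set, the bonus of that action is at most \<open>mudot (p \<bullet> theta_bar)\<close> times the
  dual norm \<open>\<parallel>p\<parallel>\<close> induced by \<open>L\<close>. For \<open>v\<close> drawn from \<open>N(0, L\<^sup>-\<^sup>1)\<close> the form \<open>p \<bullet> v\<close> is centred
  normal with standard deviation \<open>\<parallel>p\<parallel>\<close>, so \<open>\<parallel>p\<parallel> = sqrt (pi / 2) * E \<bar>p \<bullet> v\<bar>\<close>. Writing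
  \<open>\<bar>p \<bullet> v\<bar> = h v * sqrt (v \<bullet> L v)\<close> with \<open>h\<close> homogeneous of degree zero, the radial part of the
  Gaussian gives \<open>E [h v * v \<bullet> L v] = d * E [h v]\<close>, whence \<open>E \<bar>p \<bullet> v\<bar> \<le> sqrt d * E [h v]\<close> by AM--GM.
  The THaTS action maximises \<open>mudot (q \<bullet> theta_bar) * \<bar>q \<bullet> v\<bar>\<close> over the features \<open>q\<close>, so by
  Cauchy--Schwarz \<open>mudot (p \<bullet> theta_bar) * h v\<close> is at most its bonus; integrating over the
  context gives the theorem. That \<open>N(0, L\<^sup>-\<^sup>1)\<close> is a probability measure is proved by following \<open>L\<close>
  through its rank-one updates from \<open>lam I\<close>.\<close>

section \<open>Positive definite quadratic forms\<close>

definition qform :: "real^'n^'n \<Rightarrow> real^'n \<Rightarrow> real" where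
  "qform L v = v \<bullet> (L *v v)"

definition pos_def :: "real^'n^'n \<Rightarrow> bool" where
  "pos_def L \<longleftrightarrow> transpose L = L \<and> (\<exists>e>0. \<forall>v. e * (norm v)\<^sup>2 \<le> qform L v)"

lemma inner_symmetric_matrix_vector:
  fixes L :: "real^'n^'n"
  assumes "transpose L = L"
  shows "x \<bullet> (L *v y) = y \<bullet> (L *v x)"
  by (metis assms dot_lmul_matrix inner_commute vector_transpose_matrix)

lemma qform_scaleR: "qform L (c *\<^sub>R v) = c\<^sup>2 * qform L v"
  by (simp add: qform_def matrix_vector_mult_scaleR power2_eq_square)

lemma qform_add:
  fixes L :: "real^'n^'n"
  assumes "transpose L = L"
  shows "qform L (u + v) = qform L u + 2 * (u \<bullet> (L *v v)) + qform L v"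
  using inner_symmetric_matrix_vector[OF assms, of v u]
  by (simp add: qform_def matrix_vector_right_distrib inner_add_left inner_add_right)

lemma continuous_on_qform: "continuous_on A (qform L)"
  unfolding qform_def by (intro continuous_intros linear_continuous_on matrix_vector_mul_linear)

lemma borel_measurable_qform[measurable]: "qform L \<in> borel_measurable borel"
  by (rule borel_measurable_continuous_onI[OF continuous_on_qform])

lemma pos_def_qform_pos: "pos_def L \<Longrightarrow> v \<noteq> 0 \<Longrightarrow> 0 < qform L v"
  unfolding pos_def_def by (smt (verit) mult_pos_pos zero_less_norm_iff zero_less_power2)

lemma pos_def_qform_nonneg: "pos_def L \<Longrightarrow> 0 \<le> qform L v"
  using pos_def_qform_pos[of L v] by (cases "v = 0") (auto simp: qform_def)

lemma pos_def_qform_eq_0_iff: "pos_def L \<Longrightarrow> qform L v = 0 \<longleftrightarrow> v = 0"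
  using pos_def_qform_pos[of L v] by (cases "v = 0") (auto simp: qform_def)

lemma pos_def_matrix_inv:
  fixes L :: "real^'n^'n"
  assumes "pos_def L"
  shows "L ** matrix_inv L = mat 1" "matrix_inv L ** L = mat 1"
proof -
  have "L *v v = 0 \<Longrightarrow> v = 0" for v
    using pos_def_qform_eq_0_iff[OF assms, of v] by (simp add: qform_def)
  then have "\<exists>A. L ** A = mat 1 \<and> A ** L = mat 1"
    using matrix_left_invertible_ker invertible_left_inverse unfolding invertible_def by blast
  from someI_ex[OF this] show "L ** matrix_inv L = mat 1" "matrix_inv L ** L = mat 1"
    unfolding matrix_inv_def by auto
qed

lemma pos_def_mult_matrix_inv_vector: "pos_def L \<Longrightarrow> L *v (matrix_inv L *v p) = p"
  by (simp add: matrix_vector_mul_assoc pos_def_matrix_inv)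

lemma pos_def_inner_matrix_inv:
  "pos_def L \<Longrightarrow> p \<bullet> (matrix_inv L *v p) = qform L (matrix_inv L *v p)"
  by (simp add: qform_def pos_def_mult_matrix_inv_vector inner_commute)

lemma inv_norm_nonneg: "pos_def L \<Longrightarrow> 0 \<le> inv_norm p L"
  by (simp add: inv_norm_def pos_def_inner_matrix_inv pos_def_qform_nonneg)

lemma inv_norm_pos: "pos_def L \<Longrightarrow> p \<noteq> 0 \<Longrightarrow> 0 < inv_norm p L"
  by (metis inv_norm_def pos_def_inner_matrix_inv pos_def_mult_matrix_inv_vector pos_def_qform_pos
      real_sqrt_gt_zero matrix_vector_mult_0_right)

lemma inv_norm_squared: "pos_def L \<Longrightarrow> (inv_norm p L)\<^sup>2 = p \<bullet> (matrix_inv L *v p)"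
  by (simp add: inv_norm_def pos_def_inner_matrix_inv pos_def_qform_nonneg)

lemma continuous_on_inv_norm: "continuous_on A (\<lambda>q. inv_norm q L)"
  unfolding inv_norm_def by (intro continuous_intros linear_continuous_on matrix_vector_mul_linear)

lemma borel_measurable_inv_norm[measurable]: "(\<lambda>q. inv_norm q L) \<in> borel_measurable borel"
  by (rule borel_measurable_continuous_onI[OF continuous_on_inv_norm])

lemma inv_norm_bounded_on_unit_ball: "\<exists>B. \<forall>q. norm q \<le> 1 \<longrightarrow> \<bar>inv_norm q L\<bar> \<le> B"
proof -
  have "compact ((\<lambda>q. inv_norm q L) ` cball 0 1)"
    by (intro compact_continuous_image continuous_on_inv_norm compact_cball)
  then obtain B where "\<forall>y \<in> (\<lambda>q. inv_norm q L) ` cball 0 1. norm y \<le> B"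
    by (meson bounded_iff compact_imp_bounded)
  then show ?thesis by (intro exI[of _ B]) auto
qed

lemma abs_inner_le_inv_norm:
  fixes L :: "real^'n^'n"
  assumes L: "pos_def L"
  shows "\<bar>q \<bullet> v\<bar> \<le> inv_norm q L * sqrt (qform L v)"
proof -
  have sym: "transpose L = L" using L unfolding pos_def_def by auto
  define y where "y = matrix_inv L *v q"
  have qv: "q \<bullet> v = y \<bullet> (L *v v)"
    using inner_symmetric_matrix_vector[OF sym, of y v] pos_def_mult_matrix_inv_vector[OF L]
    by (simp add: y_def inner_commute)
  have "(y \<bullet> (L *v v))\<^sup>2 \<le> qform L y * qform L v"
  proof (cases "v = 0")
    case False
    let ?a = "qform L v" and ?b = "y \<bullet> (L *v v)"
    have a: "0 < ?a" using pos_def_qform_pos[OF L False] .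
    have "0 \<le> qform L (?a *\<^sub>R y + (- ?b) *\<^sub>R v)"
      by (rule pos_def_qform_nonneg[OF L])
    also have "\<dots> = ?a * (?a * qform L y - ?b\<^sup>2)"
      unfolding qform_add[OF sym] qform_scaleR
      by (simp add: matrix_vector_mult_scaleR power2_eq_square algebra_simps del: scaleR_minus_left)
    finally show ?thesis using a by (simp add: zero_le_mult_iff mult.commute)
  qed (simp add: qform_def)
  then have "\<bar>q \<bullet> v\<bar> \<le> sqrt (qform L y * qform L v)"
    unfolding qv by (metis real_sqrt_abs real_sqrt_le_mono)
  then show ?thesis
    by (simp add: inv_norm_def y_def pos_def_inner_matrix_inv[OF L] real_sqrt_mult)
qed


lemma qform_split_along:
  fixes L :: "real^'n^'n"
  assumes L: "pos_def L" and p: "p \<noteq> 0"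
  defines "u \<equiv> (1 / (inv_norm p L)\<^sup>2) *\<^sub>R (matrix_inv L *v p)"
  shows "p \<bullet> u = 1" "qform L v = qform L (v - (p \<bullet> v) *\<^sub>R u) + (p \<bullet> v)\<^sup>2 / (inv_norm p L)\<^sup>2"
proof -
  define m where "m = (inv_norm p L)\<^sup>2"
  have m: "0 < m" unfolding m_def using inv_norm_pos[OF L p] by simp
  have sym: "transpose L = L" using L unfolding pos_def_def by simp
  have Lu: "L *v u = (1 / m) *\<^sub>R p"
    by (simp add: u_def m_def matrix_vector_mult_scaleR pos_def_mult_matrix_inv_vector[OF L])
  show pu: "p \<bullet> u = 1"
    using m inv_norm_squared[OF L, of p] by (simp add: u_def m_def)
  have "qform L (w + s *\<^sub>R u) = qform L w + 2 * s * (p \<bullet> w) / m + s\<^sup>2 / m" for w s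
    unfolding qform_add[OF sym] qform_scaleR
    by (simp add: matrix_vector_mult_scaleR Lu qform_def pu inner_commute power2_eq_square)
  from this[of "v - (p \<bullet> v) *\<^sub>R u" "p \<bullet> v"]
  show "qform L v = qform L (v - (p \<bullet> v) *\<^sub>R u) + (p \<bullet> v)\<^sup>2 / (inv_norm p L)\<^sup>2"
    by (simp add: inner_diff_right pu m_def)
qed

section \<open>Rank-one updates\<close>

lemma outer_mult_vector: "outer p *v v = (p \<bullet> v) *\<^sub>R p"
  by (simp add: outer_def vec_eq_iff matrix_vector_mult_def inner_vec_def sum_distrib_left mult_ac)

lemma qform_rank_one_update: "qform (L + c *\<^sub>R outer p) v = qform L v + c * (p \<bullet> v)\<^sup>2"
  by (simp add: qform_def matrix_vector_mult_add_rdistrib outer_mult_vector inner_add_right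
      power2_eq_square scaleR_matrix_vector_assoc[symmetric] inner_commute)

lemma pos_def_rank_one_update:
  assumes "pos_def L" "0 \<le> c"
  shows "pos_def (L + c *\<^sub>R outer p)"
proof -
  have "transpose (L + c *\<^sub>R outer p) = L + c *\<^sub>R outer p"
    using assms(1) by (simp add: pos_def_def transpose_def outer_def vec_eq_iff mult.commute)
  moreover have "qform L v \<le> qform (L + c *\<^sub>R outer p) v" for v
    using assms(2) by (simp add: qform_rank_one_update)
  ultimately show ?thesis
    using assms(1) unfolding pos_def_def by (meson order_trans)
qed

lemma det_add_rank_one_rows:
  fixes A :: "real^'n^'n"
  assumes "finite K"
  shows "det (\<chi> i. if i \<in> K then A$i + u$i *s w else A$i)
       = det A + (\<Sum>k\<in>K. u$k * det (\<chi> i. if i = k then w else A$i))"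
  using assms
proof (induction K arbitrary: A rule: finite_induct)
  case empty
  then show ?case by (simp add: vec_lambda_eta)
next
  case (insert k K)
  define B where "B = (\<chi> i. if i = k then A$k + u$k *s w else A$i)"
  have "(\<chi> i. if i \<in> insert k K then A$i + u$i *s w else A$i)
      = (\<chi> i. if i \<in> K then B$i + u$i *s w else B$i)"
    using insert.hyps by (auto simp: B_def vec_eq_iff)
  moreover have "det B = det A + u$k * det (\<chi> i. if i = k then w else A$i)"
  proof -
    have "det B = det (\<chi> i. if i = k then A$k else A$i) + det (\<chi> i. if i = k then u$k *s w else A$i)"
      unfolding B_def by (rule det_row_add)
    also have "(\<chi> i. if i = k then A$k else A$i) = A" by (simp add: vec_eq_iff)
    finally show ?thesis by (simp add: det_row_mul)
  qed
  moreover have "det (\<chi> i. if i = j then w else B$i) = det (\<chi> i. if i = j then w else A$i)"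
    if "j \<in> K" for j
  proof -
    have jk: "j \<noteq> k" using that insert.hyps by auto
    let ?C = "(\<chi> i. if i = j then w else A$i) :: real^'n^'n"
    have "det (\<chi> r. if r = k then row k ?C + (u$k) *s row j ?C else row r ?C) = det ?C"
      using jk by (intro det_row_operation) auto
    moreover have "(\<chi> r. if r = k then row k ?C + (u$k) *s row j ?C else row r ?C)
        = (\<chi> i. if i = j then w else B$i)"
      using jk by (auto simp: vec_eq_iff row_def B_def)
    ultimately show ?thesis by simp
  qed
  ultimately show ?case
    using insert.IH insert.hyps by (simp add: algebra_simps)
qed

text \<open>Expand row by row; each determinant with one row replaced by \<open>p\<close> is given by Cramer's rule.\<close>
lemma det_rank_one_update:
  fixes L :: "real^'n^'n"
  assumes L: "pos_def L"
  shows "det (L + c *\<^sub>R outer p) = det L * (1 + c * (inv_norm p L)\<^sup>2)"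
proof -
  define y where "y = matrix_inv L *v p"
  have Ly: "L *v y = p" unfolding y_def by (rule pos_def_mult_matrix_inv_vector[OF L])
  have sym: "L$i$j = L$j$i" for i j
    using L unfolding pos_def_def by (metis transpose_def vec_lambda_beta)
  have cramer: "det (\<chi> i. if i = k then p else L$i) = y$k * det L" for k
  proof -
    have "(\<chi> i. if i = k then p else L$i) = transpose (\<chi> i j. if j = k then (L *v y)$i else L$i$j)"
      by (simp add: Ly vec_eq_iff transpose_def sym)
    then show ?thesis by (simp add: cramer_lemma)
  qed
  have "L + c *\<^sub>R outer p = (\<chi> i. if i \<in> UNIV then L$i + (c *\<^sub>R p)$i *s p else L$i)"
    by (simp add: vec_eq_iff outer_def)
  then have "det (L + c *\<^sub>R outer p) = det L + (\<Sum>k\<in>UNIV. c * (p$k * y$k)) * det L"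
    using det_add_rank_one_rows[of UNIV L "c *\<^sub>R p" p]
    by (simp add: cramer sum_distrib_left sum_distrib_right mult_ac)
  also have "(\<Sum>k\<in>UNIV. c * (p$k * y$k)) = c * (inv_norm p L)\<^sup>2"
    by (simp add: inv_norm_squared[OF L] y_def inner_vec_def sum_distrib_left)
  finally show ?thesis by (simp add: algebra_simps)
qed

section \<open>Gaussian integrals\<close>

lemma nn_integral_ennreal_cmult:
  assumes "0 \<le> c" and [measurable]: "f \<in> borel_measurable M" "G \<in> borel_measurable M"
  shows "(\<integral>\<^sup>+v. ennreal (c * f v) * G v \<partial>M) = ennreal c * (\<integral>\<^sup>+v. ennreal (f v) * G v \<partial>M)"
proof -
  have "(\<integral>\<^sup>+v. ennreal (c * f v) * G v \<partial>M) = (\<integral>\<^sup>+v. ennreal c * (ennreal (f v) * G v) \<partial>M)"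
    using assms(1) by (intro nn_integral_cong) (simp add: ennreal_mult' mult.assoc)
  then show ?thesis by (simp add: nn_integral_cmult)
qed

lemma nn_integral_lborel_affine:
  fixes f :: "'a::euclidean_space \<Rightarrow> ennreal"
  assumes [measurable]: "f \<in> borel_measurable borel" and c: "c \<noteq> 0"
  shows "(\<integral>\<^sup>+x. f x \<partial>lborel) = ennreal (\<bar>c\<bar> ^ DIM('a)) * (\<integral>\<^sup>+x. f (t + c *\<^sub>R x) \<partial>lborel)"
  by (subst lborel_affine[OF c, of t]) (simp add: nn_integral_density nn_integral_distr nn_integral_cmult)

lemma nn_integral_lborel_translate:
  fixes f :: "'a::euclidean_space \<Rightarrow> ennreal"
  assumes "f \<in> borel_measurable borel"
  shows "(\<integral>\<^sup>+x. f (t + x) \<partial>lborel) = (\<integral>\<^sup>+x. f x \<partial>lborel)"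
  using nn_integral_lborel_affine[OF assms one_neq_zero, of t] by simp

lemma nn_integral_normal_density:
  assumes "0 < \<sigma>"
  shows "(\<integral>\<^sup>+x. normal_density \<mu> \<sigma> x \<partial>lborel) = 1"
proof -
  interpret prob_space "density lborel (normal_density \<mu> \<sigma>)"
    using assms by (rule prob_space_normal_density)
  show ?thesis using emeasure_space_1 by (simp add: emeasure_density)
qed

lemma nn_integral_exp_square:
  assumes b: "0 < b"
  shows "(\<integral>\<^sup>+x. exp (- (b * x\<^sup>2) / 2) \<partial>lborel) = sqrt (2 * pi / b)"
proof -
  have "exp (- (b * x\<^sup>2) / 2) = sqrt (2 * pi / b) * normal_density 0 (1 / sqrt b) x" for x
    using b by (simp add: normal_density_def power_divide real_sqrt_divide real_sqrt_mult)
  then show ?thesis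
    using b nn_integral_normal_density[of "1 / sqrt b" 0]
    by (simp add: ennreal_mult nn_integral_cmult)
qed

lemma nn_integral_exp_normal_density:
  assumes c: "0 \<le> c" and \<sigma>: "0 < \<sigma>"
  shows "(\<integral>\<^sup>+x. ennreal (exp (- (c * x\<^sup>2) / 2)) * normal_density 0 \<sigma> x \<partial>lborel)
    = 1 / sqrt (1 + c * \<sigma>\<^sup>2)"
proof -
  define r where "r = sqrt (1 + c * \<sigma>\<^sup>2)"
  have r: "0 < r" "r\<^sup>2 = 1 + c * \<sigma>\<^sup>2" unfolding r_def using c by (simp_all add: add_pos_nonneg)
  have pointwise: "exp (- (c * x\<^sup>2) / 2) * normal_density 0 \<sigma> x = 1 / r * normal_density 0 (\<sigma> / r) x"
    for x
  proof -
    have "- (c * x\<^sup>2) / 2 + - x\<^sup>2 / (2 * \<sigma>\<^sup>2) = - x\<^sup>2 / (2 * (\<sigma> / r)\<^sup>2)"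
      using \<sigma> r by (simp add: power_divide field_simps)
    then have exp: "exp (- (c * x\<^sup>2) / 2) * exp (- x\<^sup>2 / (2 * \<sigma>\<^sup>2)) = exp (- x\<^sup>2 / (2 * (\<sigma> / r)\<^sup>2))"
      by (simp only: mult_exp_exp)
    have sqrt: "1 / sqrt (2 * pi * \<sigma>\<^sup>2) = 1 / r * (1 / sqrt (2 * pi * (\<sigma> / r)\<^sup>2))"
      using \<sigma> r(1) by (simp add: real_sqrt_mult real_sqrt_divide power_divide)
    have "exp (- (c * x\<^sup>2) / 2) * normal_density 0 \<sigma> x
        = 1 / sqrt (2 * pi * \<sigma>\<^sup>2) * (exp (- (c * x\<^sup>2) / 2) * exp (- x\<^sup>2 / (2 * \<sigma>\<^sup>2)))"
      by (simp add: normal_density_def)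
    also have "\<dots> = 1 / r * (1 / sqrt (2 * pi * (\<sigma> / r)\<^sup>2) * exp (- x\<^sup>2 / (2 * (\<sigma> / r)\<^sup>2)))"
      unfolding exp sqrt by simp
    finally show ?thesis by (simp add: normal_density_def)
  qed
  have "(\<integral>\<^sup>+x. ennreal (exp (- (c * x\<^sup>2) / 2)) * normal_density 0 \<sigma> x \<partial>lborel)
      = (\<integral>\<^sup>+x. ennreal (1 / r) * normal_density 0 (\<sigma> / r) x \<partial>lborel)"
  proof (rule nn_integral_cong)
    fix x
    have "ennreal (exp (- (c * x\<^sup>2) / 2)) * normal_density 0 \<sigma> x
        = ennreal (exp (- (c * x\<^sup>2) / 2) * normal_density 0 \<sigma> x)"
      by (rule ennreal_mult'[symmetric]) simp
    also have "\<dots> = ennreal (1 / r) * normal_density 0 (\<sigma> / r) x"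
      unfolding pointwise using r(1) by (intro ennreal_mult') simp
    finally show "ennreal (exp (- (c * x\<^sup>2) / 2)) * normal_density 0 \<sigma> x
        = ennreal (1 / r) * normal_density 0 (\<sigma> / r) x" .
  qed
  also have "\<dots> = 1 / r"
    using r(1) \<sigma> by (simp add: nn_integral_cmult nn_integral_normal_density)
  finally show ?thesis unfolding r_def .
qed

lemma nn_integral_abs_normal_density:
  assumes "0 < \<sigma>"
  shows "(\<integral>\<^sup>+x. ennreal \<bar>x\<bar> * normal_density 0 \<sigma> x \<partial>lborel) = \<sigma> * sqrt (2 / pi)"
proof -
  have "has_bochner_integral lborel (\<lambda>x. normal_density 0 \<sigma> x * \<bar>x\<bar>) (\<sigma> * sqrt (2 / pi))"
    using normal_moment_abs_odd[of \<sigma> 0 0] assms by simp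
  then show ?thesis
    by (simp add: nn_integral_eq_integral has_bochner_integral_iff ennreal_mult[symmetric] mult.commute)
qed

lemma nn_integral_inverse_power_tail:
  assumes "1 \<le> n"
  shows "(\<integral>\<^sup>+s. ennreal (1 / s ^ Suc n) * indicator {1..} s \<partial>lborel) = 1 / real n"
proof -
  have "((\<lambda>s::real. (- 1 / real n) * inverse (s ^ n)) \<longlongrightarrow> (- 1 / real n) * 0) at_top"
    using assms by (intro tendsto_mult tendsto_const tendsto_inverse_0_at_top filterlim_pow_at_top filterlim_ident) auto
  then have "((\<lambda>s::real. - 1 / (real n * s ^ n)) \<longlongrightarrow> 0) at_top"
    by (simp add: field_simps)
  moreover have "DERIV (\<lambda>s. - 1 / (real n * s ^ n)) s :> 1 / s ^ Suc n" if "1 \<le> s" for s :: real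
  proof -
    have s: "s \<noteq> 0" using that by auto
    have "s ^ n = s * s ^ (n - 1)" using assms by (cases n) auto
    then have "real n * (real n * s ^ (n - 1)) / (real n * s ^ n)\<^sup>2 = 1 / s ^ Suc n"
      using s assms by (simp add: power2_eq_square)
    moreover have "DERIV (\<lambda>s. - 1 / (real n * s ^ n)) s :>
        real n * (real n * s ^ (n - 1)) / (real n * s ^ n)\<^sup>2"
      using s assms by (auto intro!: derivative_eq_intros simp: power2_eq_square)
    ultimately show ?thesis by simp
  qed
  ultimately show ?thesis
    by (subst nn_integral_FTC_atLeast[where F = "\<lambda>s. - 1 / (real n * s ^ n)"]) auto
qed

lemma nn_integral_gaussian_tail:
  assumes q: "0 < q"
  shows "(\<integral>\<^sup>+s. ennreal (s * q * exp (- (s\<^sup>2 * q) / 2)) * indicator {1..} s \<partial>lborel) = exp (- q / 2)"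
proof -
  have "filterlim (\<lambda>s::real. (q / 2) * s\<^sup>2) at_top at_top"
    using q by (intro filterlim_tendsto_pos_mult_at_top[OF tendsto_const] filterlim_pow_at_top
        filterlim_ident) auto
  then have "filterlim (\<lambda>s::real. - ((q / 2) * s\<^sup>2)) at_bot at_top"
    by (simp add: filterlim_uminus_at_bot)
  then have "((\<lambda>s::real. - exp (- ((q / 2) * s\<^sup>2))) \<longlongrightarrow> - 0) at_top"
    by (intro tendsto_minus filterlim_compose[OF exp_at_bot])
  then have "((\<lambda>s::real. - exp (- (s\<^sup>2 * q) / 2)) \<longlongrightarrow> 0) at_top"
    by (simp add: field_simps)
  then show ?thesis
    using q by (subst nn_integral_FTC_atLeast[where F = "\<lambda>s. - exp (- (s\<^sup>2 * q) / 2)"])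
      (auto intro!: derivative_eq_intros simp: field_simps)
qed

text \<open>Both sides equal \<open>\<integral>\<integral> F (\<alpha> v + s) * K (\<alpha> v) * g v ds dv\<close>: translate \<open>s\<close> for the
  right-hand side, and shift \<open>v\<close> along \<open>u\<close> before swapping the integrals for the left-hand side.\<close>
lemma nn_integral_lborel_fibre_swap:
  fixes \<alpha> :: "'a::euclidean_space \<Rightarrow> real" and g :: "'a \<Rightarrow> ennreal" and F K :: "real \<Rightarrow> ennreal"
  assumes [measurable]: "\<alpha> \<in> borel_measurable borel" "g \<in> borel_measurable borel"
    "F \<in> borel_measurable borel" "K \<in> borel_measurable borel"
    and \<alpha>_shift: "\<And>v s. \<alpha> (v + s *\<^sub>R u) = \<alpha> v + s"
    and g_shift: "\<And>v s. g (v + s *\<^sub>R u) = g v"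
  shows "(\<integral>\<^sup>+v. F (\<alpha> v) * g v \<partial>lborel) * (\<integral>\<^sup>+s. K s \<partial>lborel)
       = (\<integral>\<^sup>+s. F s \<partial>lborel) * (\<integral>\<^sup>+v. K (\<alpha> v) * g v \<partial>lborel)"
proof -
  define D where "D = (\<integral>\<^sup>+s. (\<integral>\<^sup>+v. F (\<alpha> v + s) * K (\<alpha> v) * g v \<partial>lborel) \<partial>lborel)"
  have "D = (\<integral>\<^sup>+v. (\<integral>\<^sup>+s. F (\<alpha> v + s) \<partial>lborel) * (K (\<alpha> v) * g v) \<partial>lborel)"
    unfolding D_def by (subst lborel_pair.Fubini') (simp_all add: nn_integral_multc mult.assoc)
  also have "\<dots> = (\<integral>\<^sup>+v. (\<integral>\<^sup>+s. F s \<partial>lborel) * (K (\<alpha> v) * g v) \<partial>lborel)"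
    using nn_integral_lborel_translate[of F] by simp
  also have "\<dots> = (\<integral>\<^sup>+s. F s \<partial>lborel) * (\<integral>\<^sup>+v. K (\<alpha> v) * g v \<partial>lborel)"
    by (rule nn_integral_cmult) measurable
  finally have D_right: "D = (\<integral>\<^sup>+s. F s \<partial>lborel) * (\<integral>\<^sup>+v. K (\<alpha> v) * g v \<partial>lborel)" .
  have "D = (\<integral>\<^sup>+s. (\<integral>\<^sup>+v. F (\<alpha> v) * K (\<alpha> v - s) * g v \<partial>lborel) \<partial>lborel)"
    unfolding D_def
  proof (rule nn_integral_cong)
    fix s
    have "\<alpha> ((- s) *\<^sub>R u + v) = \<alpha> v - s" "g ((- s) *\<^sub>R u + v) = g v" for v
      using \<alpha>_shift[of v "- s"] g_shift[of v "- s"] by (simp_all add: add.commute)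
    then show "(\<integral>\<^sup>+v. F (\<alpha> v + s) * K (\<alpha> v) * g v \<partial>lborel)
        = (\<integral>\<^sup>+v. F (\<alpha> v) * K (\<alpha> v - s) * g v \<partial>lborel)"
      using nn_integral_lborel_translate[of "\<lambda>v. F (\<alpha> v + s) * K (\<alpha> v) * g v" "(- s) *\<^sub>R u"]
      by simp
  qed
  also have "\<dots> = (\<integral>\<^sup>+v. (\<integral>\<^sup>+s. F (\<alpha> v) * g v * K (\<alpha> v + (- 1) * s) \<partial>lborel) \<partial>lborel)"
    by (subst lborel_pair.Fubini') (simp_all add: mult_ac)
  also have "\<dots> = (\<integral>\<^sup>+v. F (\<alpha> v) * g v \<partial>lborel) * (\<integral>\<^sup>+s. K s \<partial>lborel)"
    using nn_integral_real_affine[of K "- 1"]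
    by (simp add: nn_integral_cmult nn_integral_multc)
  finally show ?thesis using D_right by simp
qed

text \<open>Write \<open>exp (- Q v / 2)\<close> as the integral of \<open>s * Q v * exp (- s\<^sup>2 * Q v / 2)\<close> over \<open>s \<ge> 1\<close>
  and swap the integrals: the substitution \<open>v \<mapsto> v / s\<close> turns the inner integral into
  \<open>s ^ - (d + 1)\<close> times the left-hand side, whose integral over \<open>s \<ge> 1\<close> is \<open>1 / d\<close>.\<close>
lemma nn_integral_homogeneous_gaussian:
  fixes Q :: "'a::euclidean_space \<Rightarrow> real" and h :: "'a \<Rightarrow> ennreal"
  assumes [measurable]: "Q \<in> borel_measurable borel" "h \<in> borel_measurable borel"
    and Q_pos: "\<And>v. v \<noteq> 0 \<Longrightarrow> 0 < Q v"
    and Q_scale: "\<And>c v. Q (c *\<^sub>R v) = c\<^sup>2 * Q v"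
    and h_scale: "\<And>c v. 0 < c \<Longrightarrow> h (c *\<^sub>R v) = h v"
  shows "(\<integral>\<^sup>+v. h v * ennreal (Q v) * exp (- Q v / 2) \<partial>lborel)
       = of_nat DIM('a) * (\<integral>\<^sup>+v. h v * exp (- Q v / 2) \<partial>lborel)"
proof -
  define d where "d = DIM('a)"
  have d: "1 \<le> d" unfolding d_def by (simp add: Suc_leI)
  have Q_nonneg: "0 \<le> Q v" for v
    using Q_pos[of v] Q_scale[of 0 v] by (cases "v = 0") auto
  define \<Psi> where "\<Psi> = (\<integral>\<^sup>+v. h v * ennreal (Q v) * exp (- Q v / 2) \<partial>lborel)"
  define k where "k v s = h v * ennreal (s * Q v * exp (- (s\<^sup>2 * Q v) / 2)) * indicator {1..} s" for v s
  have [measurable]: "(\<lambda>(v, s). k v s) \<in> borel_measurable (lborel \<Otimes>\<^sub>M lborel)"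
    unfolding k_def by measurable
  have inner_v: "(\<integral>\<^sup>+s. k v s \<partial>lborel) = h v * exp (- Q v / 2)" if "v \<noteq> 0" for v
    using nn_integral_gaussian_tail[OF Q_pos[OF that]]
    by (simp add: k_def nn_integral_cmult mult.assoc)
  have inner_s: "(\<integral>\<^sup>+v. k v s \<partial>lborel) = ennreal (1 / s ^ Suc d) * indicator {1..} s * \<Psi>" for s
  proof (cases "1 \<le> s")
    case True
    then have s: "0 < s" by simp
    have "k ((1 / s) *\<^sub>R v) s = ennreal (1 / s) * (h v * ennreal (Q v) * exp (- Q v / 2))" for v
      using True s Q_nonneg[of v]
      by (simp add: k_def Q_scale h_scale power_divide ennreal_mult[symmetric] field_simps
          power2_eq_square)
    then have "(\<integral>\<^sup>+v. k v s \<partial>lborel) = ennreal ((1 / s) ^ d) * (ennreal (1 / s) * \<Psi>)"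
      using nn_integral_lborel_affine[of "\<lambda>v. k v s" "1 / s" 0] s
      by (simp add: d_def \<Psi>_def nn_integral_cmult)
    also have "\<dots> = ennreal ((1 / s) ^ d * (1 / s)) * \<Psi>"
      using s by (subst ennreal_mult) (simp_all add: mult.assoc)
    finally show ?thesis using True by (simp add: power_one_over mult.commute)
  qed (simp add: k_def)
  have "(\<integral>\<^sup>+v. h v * exp (- Q v / 2) \<partial>lborel) = (\<integral>\<^sup>+v. (\<integral>\<^sup>+s. k v s \<partial>lborel) \<partial>lborel)"
    using AE_lborel_singleton[of 0] by (intro nn_integral_cong_AE) (auto simp: inner_v)
  also have "\<dots> = (\<integral>\<^sup>+s. (\<integral>\<^sup>+v. k v s \<partial>lborel) \<partial>lborel)"
    by (rule lborel_pair.Fubini'[symmetric]) measurable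
  also have "\<dots> = ennreal (1 / real d) * \<Psi>"
    unfolding inner_s using nn_integral_inverse_power_tail[OF d] by (simp add: nn_integral_multc)
  finally show ?thesis
    using d by (simp add: \<Psi>_def d_def[symmetric] mult.assoc[symmetric] ennreal_of_nat_eq_real_of_nat
        ennreal_mult[symmetric])
qed

definition gauss_integral :: "real^'n^'n \<Rightarrow> ennreal" where
  "gauss_integral L = (\<integral>\<^sup>+v. exp (- qform L v / 2) \<partial>lborel)"

text \<open>The Gaussian weight factors into a function of \<open>p \<bullet> v\<close> times a function of the projection along
  \<open>u = L\<^sup>-\<^sup>1 p / (p \<bullet> L\<^sup>-\<^sup>1 p)\<close>, which is invariant under shifts along \<open>u\<close>.\<close>
lemma nn_integral_inner_gauss:
  fixes L :: "real^'n^'n" and F :: "real \<Rightarrow> ennreal"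
  assumes L: "pos_def L" and p: "p \<noteq> 0" and [measurable]: "F \<in> borel_measurable borel"
  shows "(\<integral>\<^sup>+v. F (p \<bullet> v) * exp (- qform L v / 2) \<partial>lborel)
       = (\<integral>\<^sup>+y. F y * normal_density 0 (inv_norm p L) y \<partial>lborel) * gauss_integral L"
proof -
  define \<sigma> where "\<sigma> = inv_norm p L"
  define m where "m = \<sigma>\<^sup>2"
  define u where "u = (1 / m) *\<^sub>R (matrix_inv L *v p)"
  have \<sigma>: "0 < \<sigma>" unfolding \<sigma>_def by (rule inv_norm_pos[OF L p])
  then have m: "0 < m" unfolding m_def by simp
  note split = qform_split_along[OF L p, folded \<sigma>_def, folded m_def, folded u_def]
  define P where "P v = v - (p \<bullet> v) *\<^sub>R u" for v
  define g where "g v = ennreal (exp (- qform L (P v) / 2))" for v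
  have weight: "exp (- qform L v / 2) = exp (- (p \<bullet> v)\<^sup>2 / (2 * m)) * g v" for v
  proof -
    have "- qform L v / 2 = - (p \<bullet> v)\<^sup>2 / (2 * m) + - qform L (P v) / 2"
      using split(2)[of v] by (simp add: P_def)
    then have "exp (- qform L v / 2) = exp (- (p \<bullet> v)\<^sup>2 / (2 * m)) * exp (- qform L (P v) / 2)"
      by (simp only: exp_add)
    then show ?thesis by (simp add: g_def ennreal_mult)
  qed
  have density: "normal_density 0 \<sigma> y = 1 / sqrt (2 * pi * m) * exp (- y\<^sup>2 / (2 * m))" for y
    by (simp add: normal_density_def m_def)
  have [measurable]: "g \<in> borel_measurable borel"
    unfolding g_def P_def by measurable
  have "(\<integral>\<^sup>+v. F (p \<bullet> v) * exp (- (p \<bullet> v)\<^sup>2 / (2 * m)) * g v \<partial>lborel)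
        * (\<integral>\<^sup>+y. normal_density 0 \<sigma> y \<partial>lborel)
      = (\<integral>\<^sup>+y. F y * exp (- y\<^sup>2 / (2 * m)) \<partial>lborel)
        * (\<integral>\<^sup>+v. normal_density 0 \<sigma> (p \<bullet> v) * g v \<partial>lborel)"
    unfolding g_def P_def
    by (rule nn_integral_lborel_fibre_swap[where u = u])
      (simp_all add: inner_add_right split(1) scaleR_add_left)
  moreover have "(\<integral>\<^sup>+v. normal_density 0 \<sigma> (p \<bullet> v) * g v \<partial>lborel)
      = ennreal (1 / sqrt (2 * pi * m)) * gauss_integral L"
    unfolding density gauss_integral_def weight using m by (intro nn_integral_ennreal_cmult) measurable
  moreover have "(\<integral>\<^sup>+y. F y * normal_density 0 \<sigma> y \<partial>lborel)
      = ennreal (1 / sqrt (2 * pi * m)) * (\<integral>\<^sup>+y. F y * exp (- y\<^sup>2 / (2 * m)) \<partial>lborel)"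
    unfolding density using m nn_integral_ennreal_cmult[of "1 / sqrt (2 * pi * m)" "\<lambda>y. exp (- y\<^sup>2 / (2 * m))" lborel F]
    by (simp add: mult.commute)
  ultimately show ?thesis
    unfolding weight nn_integral_normal_density[OF \<sigma>] \<sigma>_def[symmetric]
    by (simp add: mult_ac)
qed

lemma gauss_integral_rank_one_update:
  fixes L :: "real^'n^'n"
  assumes L: "pos_def L" and c: "0 \<le> c"
  shows "gauss_integral (L + c *\<^sub>R outer p)
    = ennreal (1 / sqrt (1 + c * (inv_norm p L)\<^sup>2)) * gauss_integral L"
proof (cases "p = 0")
  case True
  have "outer 0 = (0 :: real^'n^'n)" by (simp add: outer_def vec_eq_iff)
  then show ?thesis using True by (simp add: inv_norm_def)
next
  case False
  have "exp (- qform (L + c *\<^sub>R outer p) v / 2) = exp (- (c * (p \<bullet> v)\<^sup>2) / 2) * exp (- qform L v / 2)" for v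
    by (simp add: qform_rank_one_update mult_exp_exp add_divide_distrib)
  then have "gauss_integral (L + c *\<^sub>R outer p)
      = (\<integral>\<^sup>+v. ennreal (exp (- (c * (p \<bullet> v)\<^sup>2) / 2)) * exp (- qform L v / 2) \<partial>lborel)"
    by (simp add: gauss_integral_def ennreal_mult)
  also have "\<dots> = (\<integral>\<^sup>+y. ennreal (exp (- (c * y\<^sup>2) / 2)) * normal_density 0 (inv_norm p L) y \<partial>lborel)
      * gauss_integral L"
    by (rule nn_integral_inner_gauss[OF L False, where F = "\<lambda>y. ennreal (exp (- (c * y\<^sup>2) / 2))"])
      measurable
  finally show ?thesis
    using nn_integral_exp_normal_density[OF c inv_norm_pos[OF L False]] by simp
qed

lemma gauss_integral_scaleR_mat_1:
  assumes lam: "0 < lam"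
  shows "gauss_integral (lam *\<^sub>R mat 1 :: real^'n^'n) = sqrt (2 * pi / lam) ^ CARD('n)"
proof -
  have "exp (- qform (lam *\<^sub>R mat 1 :: real^'n^'n) v / 2) = (\<Prod>b\<in>Basis. exp (- (lam * (v \<bullet> b)\<^sup>2) / 2))"
    for v :: "real^'n"
  proof -
    have "qform (lam *\<^sub>R mat 1 :: real^'n^'n) v = (\<Sum>b\<in>Basis. lam * (v \<bullet> b)\<^sup>2)"
      by (simp add: qform_def scaleR_matrix_vector_assoc[symmetric] euclidean_inner[of v v]
          power2_eq_square sum_distrib_left)
    then show ?thesis
      by (simp add: exp_sum[symmetric] sum_divide_distrib[symmetric] sum_negf)
  qed
  then have "gauss_integral (lam *\<^sub>R mat 1 :: real^'n^'n)
      = (\<integral>\<^sup>+(v::real^'n). (\<Prod>b\<in>Basis. ennreal (exp (- (lam * (v \<bullet> b)\<^sup>2) / 2))) \<partial>lborel)"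
    by (simp add: gauss_integral_def prod_ennreal)
  also have "\<dots> = (\<Prod>b\<in>(Basis :: (real^'n) set). \<integral>\<^sup>+x. exp (- (lam * x\<^sup>2) / 2) \<partial>lborel)"
    by (rule nn_integral_lborel_prod) auto
  finally show ?thesis
    using nn_integral_exp_square[OF lam] lam by (simp add: ennreal_power)
qed

text \<open>Every positive definite \<open>L\<close> is Gaussian-normalised; it suffices to establish this along
  the rank-one updates that build the design matrices, which avoids diagonalising \<open>L\<close>.\<close>
definition gauss_normalised :: "real^'n^'n \<Rightarrow> bool" where
  "gauss_normalised L \<longleftrightarrow> pos_def L \<and> 0 < det L
     \<and> gauss_integral L * sqrt (det L) = sqrt (2 * pi) ^ CARD('n)"

lemma gauss_normalised_scaleR_mat_1:
  assumes lam: "0 < lam"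
  shows "gauss_normalised (lam *\<^sub>R mat 1 :: real^'n^'n)"
proof -
  have "pos_def (lam *\<^sub>R mat 1 :: real^'n^'n)"
    using lam by (auto simp: pos_def_def qform_def transpose_scalar power2_norm_eq_inner
        scaleR_matrix_vector_assoc[symmetric] intro!: exI[of _ lam])
  moreover have det: "det (lam *\<^sub>R mat 1 :: real^'n^'n) = lam ^ CARD('n)"
    by (subst det_diagonal) (auto simp: mat_def)
  moreover have "sqrt (2 * pi / lam) ^ CARD('n) * sqrt (lam ^ CARD('n)) = sqrt (2 * pi) ^ CARD('n)"
    using lam by (simp add: real_sqrt_power power_mult_distrib[symmetric] real_sqrt_divide)
  ultimately show ?thesis
    using lam by (simp add: gauss_normalised_def gauss_integral_scaleR_mat_1 ennreal_mult[symmetric])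
qed

lemma gauss_normalised_rank_one_update:
  fixes L :: "real^'n^'n"
  assumes L: "gauss_normalised L" and c: "0 \<le> c"
  shows "gauss_normalised (L + c *\<^sub>R outer p)"
proof -
  define r where "r = 1 + c * (inv_norm p L)\<^sup>2"
  have r: "0 < r" unfolding r_def using c by (simp add: add_pos_nonneg)
  have pd: "pos_def L" and det: "0 < det L"
    and Z: "gauss_integral L * sqrt (det L) = sqrt (2 * pi) ^ CARD('n)"
    using L by (auto simp: gauss_normalised_def)
  have det': "det (L + c *\<^sub>R outer p) = det L * r"
    unfolding r_def by (rule det_rank_one_update[OF pd])
  have "gauss_integral (L + c *\<^sub>R outer p) * sqrt (det (L + c *\<^sub>R outer p))
      = ennreal (1 / sqrt r) * gauss_integral L * (ennreal (sqrt (det L)) * ennreal (sqrt r))"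
    using r det by (simp add: det' gauss_integral_rank_one_update[OF pd c] r_def[symmetric]
        real_sqrt_mult ennreal_mult)
  also have "\<dots> = gauss_integral L * sqrt (det L) * (ennreal (1 / sqrt r) * ennreal (sqrt r))"
    by (simp add: mult_ac)
  also have "ennreal (1 / sqrt r) * ennreal (sqrt r) = 1"
    using r by (simp add: ennreal_mult[symmetric])
  finally have "gauss_integral (L + c *\<^sub>R outer p) * sqrt (det (L + c *\<^sub>R outer p))
      = sqrt (2 * pi) ^ CARD('n)"
    using Z by simp
  then show ?thesis
    using pos_def_rank_one_update[OF pd c] det det' r by (simp add: gauss_normalised_def)
qed

section \<open>The Gaussian measure with precision matrix \<open>L\<close>\<close>

lemma sets_gaussian_prec[simp, measurable_cong]: "sets (gaussian_prec L) = sets borel"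
  by (simp add: gaussian_prec_def)

lemma nn_integral_gaussian_prec:
  fixes L :: "real^'n^'n"
  assumes [measurable]: "f \<in> borel_measurable borel"
  shows "(\<integral>\<^sup>+v. f v \<partial>gaussian_prec L)
    = ennreal (sqrt (det L) / (2 * pi) powr (real CARD('n) / 2)) * (\<integral>\<^sup>+v. f v * exp (- qform L v / 2) \<partial>lborel)"
    (is "_ = ennreal ?c * _")
proof -
  have "(\<integral>\<^sup>+v. f v \<partial>gaussian_prec L) = (\<integral>\<^sup>+v. ennreal (?c * exp (- qform L v / 2)) * f v \<partial>lborel)"
    unfolding gaussian_prec_def qform_def[symmetric] by (rule nn_integral_density) measurable
  also have "\<dots> = (\<integral>\<^sup>+v. ennreal ?c * (f v * exp (- qform L v / 2)) \<partial>lborel)"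
    by (intro nn_integral_cong) (subst ennreal_mult''; simp add: mult_ac)
  finally show ?thesis by (simp add: nn_integral_cmult)
qed

lemma gauss_normalised_const:
  fixes L :: "real^'n^'n"
  assumes "gauss_normalised L"
  shows "ennreal (sqrt (det L) / (2 * pi) powr (real CARD('n) / 2)) * gauss_integral L = 1"
proof -
  define K where "K = sqrt (2 * pi) ^ CARD('n)"
  have K: "0 < K" unfolding K_def by simp
  have "(2 * pi) powr (real CARD('n) / 2) = ((2 * pi) powr (1 / 2)) powr real CARD('n)"
    by (simp add: powr_powr)
  then have "(2 * pi) powr (real CARD('n) / 2) = K"
    by (simp add: K_def powr_half_sqrt powr_realpow)
  then have "ennreal (sqrt (det L) / (2 * pi) powr (real CARD('n) / 2))
      = ennreal (1 / K) * ennreal (sqrt (det L))"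
    using K by (simp add: ennreal_mult'[symmetric])
  then have "ennreal (sqrt (det L) / (2 * pi) powr (real CARD('n) / 2)) * gauss_integral L
      = ennreal (1 / K) * (gauss_integral L * sqrt (det L))"
    by (simp add: mult_ac)
  also have "gauss_integral L * sqrt (det L) = K"
    using assms by (simp add: gauss_normalised_def K_def)
  also have "ennreal (1 / K) * ennreal K = 1"
    using K by (simp add: ennreal_mult'[symmetric])
  finally show ?thesis .
qed

lemma prob_space_gaussian_prec:
  fixes L :: "real^'n^'n"
  assumes "gauss_normalised L"
  shows "prob_space (gaussian_prec L)"
proof
  have "emeasure (gaussian_prec L) (space (gaussian_prec L)) = (\<integral>\<^sup>+v. 1 \<partial>gaussian_prec L)"
    by simp
  also have "\<dots> = ennreal (sqrt (det L) / (2 * pi) powr (real CARD('n) / 2))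
      * (\<integral>\<^sup>+v. (1 :: ennreal) * exp (- qform L v / 2) \<partial>lborel)"
    by (rule nn_integral_gaussian_prec) simp
  finally show "emeasure (gaussian_prec L) (space (gaussian_prec L)) = 1"
    using gauss_normalised_const[OF assms] by (simp add: gauss_integral_def)
qed

lemma nn_integral_abs_inner_gaussian_prec:
  fixes L :: "real^'n^'n"
  assumes L: "gauss_normalised L"
  shows "(\<integral>\<^sup>+v. ennreal \<bar>p \<bullet> v\<bar> \<partial>gaussian_prec L) = sqrt (2 / pi) * inv_norm p L"
proof (cases "p = 0")
  case False
  have pd: "pos_def L" using L by (simp add: gauss_normalised_def)
  have "(\<integral>\<^sup>+v. ennreal \<bar>p \<bullet> v\<bar> \<partial>gaussian_prec L)
      = ennreal (sqrt (det L) / (2 * pi) powr (real CARD('n) / 2))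
        * (\<integral>\<^sup>+v. ennreal \<bar>p \<bullet> v\<bar> * exp (- qform L v / 2) \<partial>lborel)"
    by (rule nn_integral_gaussian_prec) measurable
  also have "(\<integral>\<^sup>+v. ennreal \<bar>p \<bullet> v\<bar> * exp (- qform L v / 2) \<partial>lborel)
      = (\<integral>\<^sup>+y. ennreal \<bar>y\<bar> * normal_density 0 (inv_norm p L) y \<partial>lborel) * gauss_integral L"
    by (rule nn_integral_inner_gauss[OF pd False, where F = "\<lambda>y. ennreal \<bar>y\<bar>"]) measurable
  also have "(\<integral>\<^sup>+y. ennreal \<bar>y\<bar> * normal_density 0 (inv_norm p L) y \<partial>lborel)
      = ennreal (inv_norm p L * sqrt (2 / pi))"
    by (rule nn_integral_abs_normal_density[OF inv_norm_pos[OF pd False]])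
  also have "ennreal (sqrt (det L) / (2 * pi) powr (real CARD('n) / 2))
      * (ennreal (inv_norm p L * sqrt (2 / pi)) * gauss_integral L)
      = ennreal (inv_norm p L * sqrt (2 / pi))
        * (ennreal (sqrt (det L) / (2 * pi) powr (real CARD('n) / 2)) * gauss_integral L)"
    by (simp only: mult_ac)
  finally show ?thesis
    unfolding gauss_normalised_const[OF L] by (simp add: mult.commute)
qed (simp add: inv_norm_def)

lemma nn_integral_homogeneous_gaussian_prec:
  fixes L :: "real^'n^'n" and h :: "real^'n \<Rightarrow> ennreal"
  assumes L: "gauss_normalised L" and [measurable]: "h \<in> borel_measurable borel"
    and h_scale: "\<And>c v. 0 < c \<Longrightarrow> h (c *\<^sub>R v) = h v"
  shows "(\<integral>\<^sup>+v. h v * ennreal (qform L v) \<partial>gaussian_prec L) = of_nat CARD('n) * (\<integral>\<^sup>+v. h v \<partial>gaussian_prec L)"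
proof -
  have pd: "pos_def L" using L by (simp add: gauss_normalised_def)
  have "(\<integral>\<^sup>+v. h v * ennreal (qform L v) * exp (- qform L v / 2) \<partial>lborel)
      = of_nat CARD('n) * (\<integral>\<^sup>+v. h v * exp (- qform L v / 2) \<partial>lborel)"
    using nn_integral_homogeneous_gaussian[of "qform L" h] pos_def_qform_pos[OF pd] h_scale
    by (simp add: qform_scaleR)
  then show ?thesis
    by (simp add: nn_integral_gaussian_prec mult_ac)
qed

lemma mult_le_weighted_am_gm:
  fixes a r t :: real
  assumes "0 \<le> a" "0 < t"
  shows "a * r \<le> a * r\<^sup>2 / (2 * t) + t * a / 2"
proof -
  have "0 \<le> a * (r - t)\<^sup>2 / (2 * t)" using assms by simp
  also have "\<dots> = a * r\<^sup>2 / (2 * t) + t * a / 2 - a * r"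
    using assms by (simp add: power2_eq_square field_simps)
  finally show ?thesis by simp
qed

text \<open>Apply weighted AM--GM to \<open>\<bar>p \<bullet> v\<bar> = h v * sqrt (qform L v)\<close>; under the Gaussian the
  resulting term \<open>h v * qform L v\<close> integrates to \<open>d\<close> times \<open>h v\<close>, as \<open>h\<close> is homogeneous of degree zero.\<close>
lemma nn_integral_abs_inner_le_gaussian_prec:
  fixes L :: "real^'n^'n"
  assumes L: "gauss_normalised L"
  shows "(\<integral>\<^sup>+v. ennreal \<bar>p \<bullet> v\<bar> \<partial>gaussian_prec L)
    \<le> sqrt (CARD('n)) * (\<integral>\<^sup>+v. ennreal (\<bar>p \<bullet> v\<bar> / sqrt (qform L v)) \<partial>gaussian_prec L)"
proof -
  have pd: "pos_def L" using L by (simp add: gauss_normalised_def)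
  define d where "d = real CARD('n)"
  have d: "0 < d" unfolding d_def by simp
  define h where "h v = \<bar>p \<bullet> v\<bar> / sqrt (qform L v)" for v
  have [measurable]: "h \<in> borel_measurable borel" unfolding h_def by measurable
  have h_nonneg: "0 \<le> h v" for v
    unfolding h_def using pos_def_qform_nonneg[OF pd] by simp
  have h_scale: "ennreal (h (c *\<^sub>R v)) = ennreal (h v)" if "0 < c" for c v
    using that by (simp add: h_def qform_scaleR real_sqrt_mult abs_mult)
  define A where "A = (\<integral>\<^sup>+v. ennreal (h v) \<partial>gaussian_prec L)"
  have am_gm: "\<bar>p \<bullet> v\<bar> \<le> h v * qform L v / (2 * sqrt d) + sqrt d * h v / 2" for v
  proof (cases "v = 0")
    case False
    then have "\<bar>p \<bullet> v\<bar> = h v * sqrt (qform L v)"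
      using pos_def_qform_pos[OF pd False] by (simp add: h_def)
    then show ?thesis
      using mult_le_weighted_am_gm[OF h_nonneg, of "sqrt d" v "sqrt (qform L v)"] d
        pos_def_qform_nonneg[OF pd, of v]
      by simp
  qed (simp add: h_def)
  have "(\<integral>\<^sup>+v. ennreal \<bar>p \<bullet> v\<bar> \<partial>gaussian_prec L)
      \<le> (\<integral>\<^sup>+v. ennreal (1 / (2 * sqrt d)) * (ennreal (h v) * ennreal (qform L v))
          + ennreal (sqrt d / 2) * ennreal (h v) \<partial>gaussian_prec L)"
    using h_nonneg pos_def_qform_nonneg[OF pd] d
    by (intro nn_integral_mono) (simp add: am_gm ennreal_mult[symmetric] ennreal_plus[symmetric]
        del: ennreal_plus)
  also have "\<dots> = ennreal (1 / (2 * sqrt d)) * (of_nat CARD('n) * A) + ennreal (sqrt d / 2) * A"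
    using nn_integral_homogeneous_gaussian_prec[OF L, of "\<lambda>v. ennreal (h v)"] h_scale
    by (simp add: A_def nn_integral_add nn_integral_cmult)
  also have "\<dots> = ennreal (sqrt d) * A"
  proof -
    have "1 / (2 * sqrt d) * d = sqrt d / 2"
      using d by (simp add: field_simps flip: real_sqrt_mult)
    then have "ennreal (1 / (2 * sqrt d)) * of_nat CARD('n) = ennreal (sqrt d / 2)"
      using d by (simp add: d_def ennreal_of_nat_eq_real_of_nat ennreal_mult[symmetric])
    then show ?thesis
      using d by (simp add: mult.assoc[symmetric] distrib_right[symmetric] ennreal_plus[symmetric]
          del: ennreal_plus)
  qed
  finally show ?thesis by (simp add: A_def d_def h_def)
qed

lemma inv_norm_le_nn_integral_gaussian_prec:
  fixes L :: "real^'n^'n"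
  assumes L: "gauss_normalised L"
  shows "ennreal (inv_norm p L)
    \<le> sqrt (pi * CARD('n) / 2) * (\<integral>\<^sup>+v. ennreal (\<bar>p \<bullet> v\<bar> / sqrt (qform L v)) \<partial>gaussian_prec L)"
proof -
  have "ennreal (inv_norm p L) = ennreal (sqrt (pi / 2)) * ennreal (sqrt (2 / pi) * inv_norm p L)"
    by (simp add: ennreal_mult'[symmetric] real_sqrt_mult[symmetric] mult.assoc[symmetric])
  also have "\<dots> \<le> ennreal (sqrt (pi / 2))
      * (sqrt (CARD('n)) * (\<integral>\<^sup>+v. ennreal (\<bar>p \<bullet> v\<bar> / sqrt (qform L v)) \<partial>gaussian_prec L))"
    using nn_integral_abs_inner_le_gaussian_prec[OF L, of p]
    by (intro mult_left_mono) (simp_all add: nn_integral_abs_inner_gaussian_prec[OF L])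
  finally show ?thesis
    by (simp add: mult.assoc[symmetric] ennreal_mult[symmetric] real_sqrt_mult[symmetric])
qed

text \<open>In the application \<open>p\<close> is the feature of the most uncertain action, \<open>q v\<close> the feature
  of the action THaTS picks for the sample \<open>v\<close>, and \<open>w y = mudot (y \<bullet> theta_bar)\<close>.\<close>
lemma weighted_inv_norm_le_nn_integral_gaussian_prec:
  fixes L :: "real^'n^'n" and w :: "real^'n \<Rightarrow> real" and q :: "real^'n \<Rightarrow> real^'n"
  assumes L: "gauss_normalised L"
    and [measurable]: "w \<in> borel_measurable borel" "q \<in> borel_measurable borel"
    and w_nonneg: "\<And>y. 0 \<le> w y"
    and q_better: "\<And>v. w p * \<bar>p \<bullet> v\<bar> \<le> w (q v) * \<bar>q v \<bullet> v\<bar>"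
  shows "ennreal (w p * inv_norm p L)
    \<le> sqrt (pi * CARD('n) / 2) * (\<integral>\<^sup>+v. ennreal (w (q v) * inv_norm (q v) L) \<partial>gaussian_prec L)"
proof -
  have pd: "pos_def L" using L by (simp add: gauss_normalised_def)
  define h where "h v = \<bar>p \<bullet> v\<bar> / sqrt (qform L v)" for v
  have [measurable]: "h \<in> borel_measurable borel" unfolding h_def by measurable
  have pointwise: "w p * h v \<le> w (q v) * inv_norm (q v) L" for v
  proof (cases "v = 0")
    case False
    have "w p * \<bar>p \<bullet> v\<bar> \<le> w (q v) * (inv_norm (q v) L * sqrt (qform L v))"
      using q_better[of v] mult_left_mono[OF abs_inner_le_inv_norm[OF pd] w_nonneg]
      by (rule order_trans)
    then show ?thesis
      using pos_def_qform_pos[OF pd False] by (simp add: h_def field_simps)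
  qed (simp add: h_def w_nonneg inv_norm_nonneg[OF pd])
  have "ennreal (w p * inv_norm p L) = ennreal (w p) * ennreal (inv_norm p L)"
    using w_nonneg by (simp add: ennreal_mult')
  also have "\<dots> \<le> ennreal (w p) * (sqrt (pi * CARD('n) / 2) * (\<integral>\<^sup>+v. ennreal (h v) \<partial>gaussian_prec L))"
    unfolding h_def by (intro mult_left_mono inv_norm_le_nn_integral_gaussian_prec[OF L]) simp
  also have "\<dots> = sqrt (pi * CARD('n) / 2) * (\<integral>\<^sup>+v. ennreal (w p) * ennreal (h v) \<partial>gaussian_prec L)"
    by (simp add: nn_integral_cmult mult.left_commute)
  also have "\<dots> \<le> sqrt (pi * CARD('n) / 2)
      * (\<integral>\<^sup>+v. ennreal (w (q v) * inv_norm (q v) L) \<partial>gaussian_prec L)"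
    using w_nonneg
    by (intro mult_left_mono nn_integral_mono) (simp_all add: ennreal_mult'[symmetric] ennreal_leI pointwise)
  finally show ?thesis .
qed

section \<open>The logistic model and the bonus\<close>

lemma mu_pos: "0 < mu y" and mu_less_1: "mu y < 1"
  unfolding mu_def by (auto simp: divide_less_eq add_pos_pos)

lemma mudot_nonneg: "0 \<le> mudot y"
  unfolding mudot_def using mu_pos[of y] mu_less_1[of y] by simp

lemma mudot_le_quarter: "mudot y \<le> 1 / 4"
proof -
  have "0 \<le> (mu y - 1 / 2)\<^sup>2" by simp
  then show ?thesis unfolding mudot_def by (simp add: power2_eq_square algebra_simps)
qed

lemma one_plus_exp_nonzero: "1 + exp y \<noteq> (0 :: real)"
  by (metis add_pos_pos exp_gt_zero less_irrefl zero_less_one)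

lemma mu_altdef: "mu y = exp y / (1 + exp y)"
  unfolding mu_def by (simp add: field_simps one_plus_exp_nonzero exp_minus)

lemma continuous_on_mu: "continuous_on A mu"
  unfolding mu_altdef[abs_def] by (intro continuous_intros) (simp add: one_plus_exp_nonzero)

lemma borel_measurable_mudot[measurable]: "mudot \<in> borel_measurable borel"
  unfolding mudot_def[abs_def] by (intro borel_measurable_continuous_onI continuous_intros continuous_on_mu)

lemma continuous_on_loss: "continuous_on A (loss lam phi s a x t)"
proof -
  have "continuous_on A (\<lambda>\<theta>. mu (v \<bullet> \<theta>))" for v
    using continuous_on_compose[of A "\<lambda>\<theta>. v \<bullet> \<theta>" mu] continuous_on_mu
    by (simp add: o_def continuous_intros)
  moreover have "mu y \<noteq> 0" "1 - mu y \<noteq> 0" for y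
    using mu_pos[of y] mu_less_1[of y] by auto
  ultimately show ?thesis
    unfolding loss_def[abs_def] by (intro continuous_intros) auto
qed

lemma theta_bar_in_Ebar:
  assumes "0 \<le> S"
  shows "theta_bar lam S phi s a x t \<in> Ebar lam S beta phi s a x t"
proof -
  have "\<exists>\<theta>\<in>cball 0 S. \<forall>\<theta>'\<in>cball 0 S. loss lam phi s a x t \<theta> \<le> loss lam phi s a x t \<theta>'"
    using assms by (intro continuous_attains_inf compact_cball continuous_on_loss) auto
  then have "theta_bar lam S phi s a x t \<in> cball 0 S"
    unfolding theta_bar_def by (rule someI2_bex) simp
  then show ?thesis by (simp add: Ebar_def Eset_def)
qed

lemma gauss_normalised_Lmat:
  assumes "0 < lam" "0 \<le> S"
  shows "gauss_normalised (Lmat lam S beta phi s a x n)"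
proof (induction n)
  case 0
  then show ?case using gauss_normalised_scaleR_mat_1[OF assms(1)] by simp
next
  case (Suc n)
  have "0 \<le> (INF \<theta>\<in>Ebar lam S beta phi s a x (Suc n). mudot (phi (s (Suc n)) (a (Suc n)) \<bullet> \<theta>))"
    using theta_bar_in_Ebar[OF assms(2)] by (intro cINF_greatest mudot_nonneg) blast
  then show ?case using gauss_normalised_rank_one_update[OF Suc.IH] by simp
qed

lemma integral_le_mult_pair_integral:
  fixes f :: "'a \<Rightarrow> real" and g :: "'a \<times> 'b \<Rightarrow> real"
  assumes "sigma_finite_measure N"
    and f: "f \<in> borel_measurable M" "\<And>x. 0 \<le> f x"
    and g: "integrable (M \<Otimes>\<^sub>M N) g" "\<And>z. 0 \<le> g z"
    and K: "0 \<le> K"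
    and le: "\<And>x. x \<in> space M \<Longrightarrow> ennreal (f x) \<le> K * (\<integral>\<^sup>+y. g (x, y) \<partial>N)"
  shows "(\<integral>x. f x \<partial>M) \<le> K * (\<integral>z. g z \<partial>(M \<Otimes>\<^sub>M N))"
proof -
  interpret N: sigma_finite_measure N by fact
  have [measurable]: "g \<in> borel_measurable (M \<Otimes>\<^sub>M N)"
    using g(1) by (rule borel_measurable_integrable)
  have "(\<integral>\<^sup>+x. f x \<partial>M) \<le> (\<integral>\<^sup>+x. K * (\<integral>\<^sup>+y. g (x, y) \<partial>N) \<partial>M)"
    by (intro nn_integral_mono le)
  also have "\<dots> = K * (\<integral>\<^sup>+x. (\<integral>\<^sup>+y. g (x, y) \<partial>N) \<partial>M)"
    by (intro nn_integral_cmult N.borel_measurable_nn_integral_fst) measurable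
  also have "\<dots> = K * (\<integral>\<^sup>+z. g z \<partial>(M \<Otimes>\<^sub>M N))"
    by (subst N.nn_integral_fst) measurable
  also have "(\<integral>\<^sup>+z. g z \<partial>(M \<Otimes>\<^sub>M N)) = (\<integral>z. g z \<partial>(M \<Otimes>\<^sub>M N))"
    using g by (simp add: nn_integral_eq_integral)
  finally have "(\<integral>\<^sup>+x. f x \<partial>M) \<le> ennreal (K * (\<integral>z. g z \<partial>(M \<Otimes>\<^sub>M N)))"
    using K by (simp add: ennreal_mult')
  then show ?thesis
    using f K g by (simp add: integral_eq_nn_integral enn2real_leI integral_nonneg_AE)
qed

lemma Ubonus_nonneg: "pos_def L \<Longrightarrow> 0 \<le> Ubonus phi c b \<theta> L"
  by (simp add: Ubonus_def mudot_nonneg inv_norm_nonneg)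

lemma integrable_Ubonus:
  fixes M :: "'b measure" and c :: "'b \<Rightarrow> 's" and b :: "'b \<Rightarrow> 'a"
  assumes "finite_measure M"
    and [measurable]: "(\<lambda>z. phi (c z) (b z)) \<in> borel_measurable M"
    and bounded: "\<And>z. norm (phi (c z) (b z)) \<le> 1"
  shows "integrable M (\<lambda>z. Ubonus phi (c z) (b z) \<theta> L)"
proof -
  obtain B where B: "\<And>q. norm q \<le> 1 \<Longrightarrow> \<bar>inv_norm q L\<bar> \<le> B"
    using inv_norm_bounded_on_unit_ball by blast
  have "\<bar>Ubonus phi (c z) (b z) \<theta> L\<bar> \<le> 1 / 4 * B" for z
    unfolding Ubonus_def abs_mult using bounded B mudot_nonneg mudot_le_quarter
    by (intro mult_mono) auto
  then show ?thesis
    using assms(1) by (intro finite_measure.integrable_const_bound[where B = "1 / 4 * B"]) (auto simp: Ubonus_def)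
qed

lemma Ubonus_le_nn_integral_gaussian_prec:
  fixes L :: "real^'d^'d"
  assumes L: "gauss_normalised L"
    and \<omega>: "mudot (phi c b \<bullet> \<omega>) \<le> mudot (phi c b \<bullet> \<theta>)"
    and sel: "\<And>v. mudot (phi c b \<bullet> \<theta>) * \<bar>phi c b \<bullet> v\<bar> \<le> mudot (phi c (sel v) \<bullet> \<theta>) * \<bar>phi c (sel v) \<bullet> v\<bar>"
    and [measurable]: "(\<lambda>v. phi c (sel v)) \<in> borel_measurable borel"
  shows "ennreal (Ubonus phi c b \<omega> L)
    \<le> sqrt (pi * CARD('d) / 2) * (\<integral>\<^sup>+v. Ubonus phi c (sel v) \<theta> L \<partial>gaussian_prec L)"
proof -
  have pd: "pos_def L" using L by (simp add: gauss_normalised_def)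
  have "Ubonus phi c b \<omega> L \<le> mudot (phi c b \<bullet> \<theta>) * inv_norm (phi c b) L"
    unfolding Ubonus_def using \<omega> inv_norm_nonneg[OF pd] by (rule mult_right_mono)
  also have "ennreal \<dots> \<le> sqrt (pi * CARD('d) / 2) * (\<integral>\<^sup>+v. Ubonus phi c (sel v) \<theta> L \<partial>gaussian_prec L)"
    unfolding Ubonus_def using sel
    by (intro weighted_inv_norm_le_nn_integral_gaussian_prec[OF L]) (auto simp: mudot_nonneg)
  finally show ?thesis by (simp add: ennreal_leI)
qed

theorem mainTheorem9:
  fixes \<nu> :: "'s measure"
    and Act :: "'s \<Rightarrow> 'a set"
    and phi :: "'s \<Rightarrow> 'a \<Rightarrow> real^'d"
    and lam S \<delta> :: real
    and beta :: "real \<Rightarrow> nat \<Rightarrow> real"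
    and t :: nat
    and s :: "nat \<Rightarrow> 's" and a :: "nat \<Rightarrow> 'a" and x :: "nat \<Rightarrow> real"
    and AMU :: "'s \<Rightarrow> 'a" and \<omega>MU :: "'s \<Rightarrow> real^'d"
    and Ach :: "'s \<Rightarrow> real^'d \<Rightarrow> 'a"
  defines "L \<equiv> Lt lam S (beta \<delta>) phi s a x t"
    and "\<theta>b \<equiv> theta_bar lam S phi s a x t"
    and "E \<equiv> Ebar lam S (beta \<delta>) phi s a x t"
    and "V \<equiv> Vset lam S (beta \<delta>) phi s a x t"
  assumes prob: "prob_space \<nu>"
    and Act_fin: "\<And>c. finite (Act c)" and Act_ne: "\<And>c. Act c \<noteq> {}"
    and phi_bd: "\<And>c b. b \<in> Act c \<Longrightarrow> norm (phi c b) \<le> 1"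
    and S_nonneg: "0 \<le> S"
    and lam_pos: "0 < lam"
    and delta: "0 \<le> \<delta>" "\<delta> < 1"
    and beta_pos: "\<And>i. 0 < beta \<delta> i"
    and t_ge: "1 \<le> t"
    and hist: "\<And>i. 1 \<le> i \<Longrightarrow> i < t \<Longrightarrow> a i \<in> Act (s i) \<and> x i \<in> {0, 1}"
    and AMU: "\<And>c. AMU c \<in> Act c \<and>
       (\<forall>b\<in>Act c. Sup ((\<lambda>\<theta>. Ubonus phi c b \<theta> L) ` V) \<le> Sup ((\<lambda>\<theta>. Ubonus phi c (AMU c) \<theta> L) ` V))"
    and \<omega>MU: "\<And>c. \<omega>MU c \<in> E \<and> (\<forall>\<theta>\<in>E. mudot (phi c (AMU c) \<bullet> \<omega>MU c) \<le> mudot (phi c (AMU c) \<bullet> \<theta>))"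
    and Ach: "\<And>c v. Ach c v \<in> Act c \<and>
       (\<forall>b\<in>Act c. mudot (phi c b \<bullet> \<theta>b) * \<bar>phi c b \<bullet> v\<bar>
                  \<le> mudot (phi c (Ach c v) \<bullet> \<theta>b) * \<bar>phi c (Ach c v) \<bullet> v\<bar>)"
    and meas_AMU: "(\<lambda>c. phi c (AMU c)) \<in> borel_measurable \<nu>"
    and meas_\<omega>MU: "\<omega>MU \<in> borel_measurable \<nu>"
    and meas_Ach: "(\<lambda>(c, v). phi c (Ach c v)) \<in> borel_measurable (\<nu> \<Otimes>\<^sub>M gaussian_prec L)"
  shows "(\<integral>c. Ubonus phi c (AMU c) (\<omega>MU c) L \<partial>\<nu>)
         \<le> sqrt (pi * real CARD('d) / 2) *
           (\<integral>cv. Ubonus phi (fst cv) (Ach (fst cv) (snd cv)) \<theta>b L \<partial>(\<nu> \<Otimes>\<^sub>M gaussian_prec L))"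
proof -
  have L: "gauss_normalised L"
    unfolding L_def Lt_def using lam_pos S_nonneg by (rule gauss_normalised_Lmat)
  then have pd: "pos_def L" by (simp add: gauss_normalised_def)
  interpret G: prob_space "gaussian_prec L" using L by (rule prob_space_gaussian_prec)
  interpret prob_space "\<nu> \<Otimes>\<^sub>M gaussian_prec L"
    using prob G.prob_space_axioms by (intro prob_space_pair)
  have \<theta>b: "\<theta>b \<in> E"
    unfolding \<theta>b_def E_def by (rule theta_bar_in_Ebar[OF S_nonneg])
  have [measurable]: "(\<lambda>z. phi (fst z) (Ach (fst z) (snd z))) \<in> borel_measurable (\<nu> \<Otimes>\<^sub>M gaussian_prec L)"
    using meas_Ach by (simp add: case_prod_beta')
  have "ennreal (Ubonus phi c (AMU c) (\<omega>MU c) L)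
      \<le> sqrt (pi * CARD('d) / 2) * (\<integral>\<^sup>+v. Ubonus phi c (Ach c v) \<theta>b L \<partial>gaussian_prec L)"
    if "c \<in> space \<nu>" for c
    using \<omega>MU[of c] \<theta>b Ach[of c] AMU[of c] measurable_Pair2[OF meas_Ach that]
    by (intro Ubonus_le_nn_integral_gaussian_prec[OF L]) auto
  moreover have "integrable (\<nu> \<Otimes>\<^sub>M gaussian_prec L) (\<lambda>z. Ubonus phi (fst z) (Ach (fst z) (snd z)) \<theta>b L)"
    using Ach phi_bd by (intro integrable_Ubonus) (auto intro: finite_measure_axioms)
  moreover have "(\<lambda>c. Ubonus phi c (AMU c) (\<omega>MU c) L) \<in> borel_measurable \<nu>"
    using meas_AMU meas_\<omega>MU unfolding Ubonus_def by measurable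
  ultimately show ?thesis
    using Ubonus_nonneg[OF pd] prob_space_imp_sigma_finite[OF G.prob_space_axioms]
    by (intro integral_le_mult_pair_integral) auto
qed

end
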